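(* Let $X$ be a countably infinite set. The lattice $\mathrm{Cl}_{loc}(X)$ of local clones on $X$ embeds as a partial order into the power set of $\omega$ ordered by inclusion. In particular, $\mathrm{Cl}_{loc}(X)$ contains no uncountable ascending chains and no uncountable descending chains.
   Context: A clone on $X$ is a set of finitary operations $X^n\to X$ ($n\ge1$) containing all projections $\pi^n_k(x_1,\dots,x_n)=x_k$ and closed under composition. Giving $X$ the discrete topology and $X^{X^n}$ the product topology, a clone is local if for each $n$ its set of $n$-ary operations is closed in $X^{X^n}$; equivalently, an $n$-ary operation $g$ belongs to the clone whenever for every finite $B\subseteq X^n$ some $n$-ary operation of the clone agrees with $g$ on $B$. $\mathrm{Cl}_{loc}(X)$ is the complete lattice of local clones on $X$ ordered by inclusion. An order embedding is a map $e$ with $a\le b\iff e(a)\le e(b)$. *)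

theory Defs
  imports Main "HOL-Library.Countable_Set"
begin

text \<open>An n-ary operation on the carrier UNIV :: 'a is represented by a function on
  lists which is only meaningful on lists of length n and equals undefined elsewhere.\<close>

definition nary_ops :: "nat \<Rightarrow> ('a list \<Rightarrow> 'a) set" where
  "nary_ops n = {f. \<forall>xs. length xs \<noteq> n \<longrightarrow> f xs = undefined}"

definition proj_op :: "nat \<Rightarrow> nat \<Rightarrow> 'a list \<Rightarrow> 'a" where
  "proj_op n k = (\<lambda>xs. if length xs = n then xs ! k else undefined)"

definition comp_op :: "nat \<Rightarrow> ('a list \<Rightarrow> 'a) \<Rightarrow> ('a list \<Rightarrow> 'a) list \<Rightarrow> 'a list \<Rightarrow> 'a" where
  "comp_op n f gs = (\<lambda>xs. if length xs = n then f (map (\<lambda>g. g xs) gs) else undefined)"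

definition is_clone :: "(nat \<Rightarrow> ('a list \<Rightarrow> 'a) set) \<Rightarrow> bool" where
  "is_clone C \<longleftrightarrow>
     C 0 = {} \<and>
     (\<forall>n. C n \<subseteq> nary_ops n) \<and>
     (\<forall>n k. 1 \<le> n \<and> k < n \<longrightarrow> proj_op n k \<in> C n) \<and>
     (\<forall>m n f gs. 1 \<le> n \<and> f \<in> C m \<and> length gs = m \<and> set gs \<subseteq> C n
        \<longrightarrow> comp_op n f gs \<in> C n)"

definition is_local_clone :: "(nat \<Rightarrow> ('a list \<Rightarrow> 'a) set) \<Rightarrow> bool" where
  "is_local_clone C \<longleftrightarrow> is_clone C \<and>
     (\<forall>n. \<forall>g \<in> nary_ops n. n \<ge> 1 \<longrightarrow>
        (\<forall>B. finite B \<and> B \<subseteq> {xs. length xs = n} \<longrightarrow> (\<exists>f \<in> C n. \<forall>xs\<in>B. f xs = g xs))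
        \<longrightarrow> g \<in> C n)"

definition local_clones :: "(nat \<Rightarrow> ('a list \<Rightarrow> 'a) set) set" where
  "local_clones = {C. is_local_clone C}"

end

theory Submission
  imports Defs
begin

text \<open>A local clone is determined by its finite restrictions: the pairs of an arity n and a
  finite table of argument/value pairs that some n-ary operation of the clone agrees with.
  Over a countable carrier there are only countably many such pairs, so numbering them sends
  each local clone to a set of natural numbers, with inclusion of clones becoming inclusion
  of sets. A chain of subsets of a countable set that is well-ordered by inclusion is
  countable: each non-maximal member is separated from its immediate successor by a point,
  and the point belongs to every later member, so distinct members get distinct points.
  Descending chains are handled by passing to complements.\<close>

lemma wf_subset_chain_least_above:
  assumes chain: "\<And>A B. A \<in> F \<Longrightarrow> B \<in> F \<Longrightarrow> A \<subseteq> B \<or> B \<subseteq> A"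
    and wf: "wf {(A, B). A \<in> F \<and> B \<in> F \<and> A \<subset> B}"
    and "B \<in> F" "A \<subset> B"
  obtains S where "S \<in> F" "A \<subset> S" "\<And>C. C \<in> F \<Longrightarrow> A \<subset> C \<Longrightarrow> S \<subseteq> C"
proof -
  have "B \<in> {C \<in> F. A \<subset> C}" using assms(3,4) by blast
  with wf obtain S where S: "S \<in> {C \<in> F. A \<subset> C}"
    and min: "\<And>C. (C, S) \<in> {(A, B). A \<in> F \<and> B \<in> F \<and> A \<subset> B} \<Longrightarrow> C \<notin> {C \<in> F. A \<subset> C}"
    by (rule wfE_min) blast
  have "S \<subseteq> C" if "C \<in> F" "A \<subset> C" for C
    using chain[of S C] min[of C] S that by blast
  with S show thesis using that by blast
qed

lemma countable_wf_subset_chain: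
  fixes F :: "'n set set"
  assumes "countable (UNIV :: 'n set)"
    and chain: "\<And>A B. A \<in> F \<Longrightarrow> B \<in> F \<Longrightarrow> A \<subseteq> B \<or> B \<subseteq> A"
    and wf: "wf {(A, B). A \<in> F \<and> B \<in> F \<and> A \<subset> B}"
  shows "countable F"
proof -
  define point where "point A =
    (if \<exists>B\<in>F. A \<subset> B then Some (SOME x. x \<notin> A \<and> (\<forall>C\<in>F. A \<subset> C \<longrightarrow> x \<in> C)) else None)"
    for A
  have point: "x \<notin> A \<and> (\<forall>C\<in>F. A \<subset> C \<longrightarrow> x \<in> C)" if some: "point A = Some x" for A x
  proof -
    obtain B where B: "B \<in> F" "A \<subset> B" and x: "x = (SOME x. x \<notin> A \<and> (\<forall>C\<in>F. A \<subset> C \<longrightarrow> x \<in> C))"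
      using some unfolding point_def by (auto split: if_splits)
    obtain S where "S \<in> F" "A \<subset> S" "\<And>C. C \<in> F \<Longrightarrow> A \<subset> C \<Longrightarrow> S \<subseteq> C"
      using wf_subset_chain_least_above[OF chain wf B] by blast
    then have "\<exists>x. x \<notin> A \<and> (\<forall>C\<in>F. A \<subset> C \<longrightarrow> x \<in> C)" by blast
    then show ?thesis unfolding x by (rule someI_ex)
  qed
  have point_neq: "point A \<noteq> point B" if B: "B \<in> F" "A \<subset> B" for A B
  proof
    assume eq: "point A = point B"
    have "\<exists>C\<in>F. A \<subset> C" using B by blast
    then obtain x where x: "point A = Some x" unfolding point_def by simp
    then have "x \<in> B" using point B by blast
    moreover have "x \<notin> B" using point x eq by metis
    ultimately show False by contradiction
  qed
  have "inj_on point F"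
  proof (rule inj_onI, rule ccontr)
    fix A B assume "A \<in> F" "B \<in> F" "point A = point B" "A \<noteq> B"
    then show False using chain[of A B] point_neq[of A B] point_neq[of B A] by auto
  qed
  moreover have "countable (UNIV :: 'n option set)"
    unfolding UNIV_option_conv by (intro countable_insert countable_image assms(1))
  ultimately show ?thesis
    using countable_subset[OF subset_UNIV] countable_image_inj_on by blast
qed

lemma countable_wf_supset_chain:
  fixes F :: "'n set set"
  assumes "countable (UNIV :: 'n set)"
    and chain: "\<And>A B. A \<in> F \<Longrightarrow> B \<in> F \<Longrightarrow> A \<subseteq> B \<or> B \<subseteq> A"
    and wf: "wf {(A, B). A \<in> F \<and> B \<in> F \<and> B \<subset> A}"
  shows "countable F"
proof -
  have "countable (uminus ` F)"
  proof (rule countable_wf_subset_chain[OF assms(1)])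
    show "A \<subseteq> B \<or> B \<subseteq> A" if "A \<in> uminus ` F" "B \<in> uminus ` F" for A B
      using that chain by auto
    show "wf {(A, B). A \<in> uminus ` F \<and> B \<in> uminus ` F \<and> A \<subset> B}"
      by (rule wf_subset[OF wf_inv_image[OF wf, of uminus]]) auto
  qed
  then show ?thesis
    by (rule countable_image_inj_on) (simp add: inj_on_def)
qed

lemma countable_wf_chain_embedding:
  fixes K :: "'b::order set" and e :: "'b \<Rightarrow> 'n set"
  assumes "countable (UNIV :: 'n set)"
    and emb: "\<And>x y. x \<in> K \<Longrightarrow> y \<in> K \<Longrightarrow> x \<le> y \<longleftrightarrow> e x \<subseteq> e y"
    and chain: "\<And>x y. x \<in> K \<Longrightarrow> y \<in> K \<Longrightarrow> x \<le> y \<or> y \<le> x"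
    and wf: "wf {(x, y). x \<in> K \<and> y \<in> K \<and> x < y} \<or> wf {(x, y). x \<in> K \<and> y \<in> K \<and> y < x}"
  shows "countable K"
proof -
  have inj: "inj_on e K"
  proof (rule inj_onI)
    fix x y assume "x \<in> K" "y \<in> K" "e x = e y"
    then show "x = y" using emb by (blast intro: order.antisym)
  qed
  have less: "x < y \<longleftrightarrow> e x \<subset> e y" if "x \<in> K" "y \<in> K" for x y
    using emb[OF that] emb[OF that(2,1)] by (auto simp: less_le_not_le)
  have inv: "inv_into K e (e x) = x" if "x \<in> K" for x
    using inj that by (rule inv_into_f_f)
  have chain': "A \<subseteq> B \<or> B \<subseteq> A" if "A \<in> e ` K" "B \<in> e ` K" for A B
    using that chain emb by blast
  from wf have "countable (e ` K)"
  proof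
    assume "wf {(x, y). x \<in> K \<and> y \<in> K \<and> x < y}"
    then have "wf {(A, B). A \<in> e ` K \<and> B \<in> e ` K \<and> A \<subset> B}"
      by (rule wf_subset[OF wf_inv_image[of _ "inv_into K e"]]) (auto simp: less inv)
    then show ?thesis using countable_wf_subset_chain[OF assms(1) chain'] by blast
  next
    assume "wf {(x, y). x \<in> K \<and> y \<in> K \<and> y < x}"
    then have "wf {(A, B). A \<in> e ` K \<and> B \<in> e ` K \<and> B \<subset> A}"
      by (rule wf_subset[OF wf_inv_image[of _ "inv_into K e"]]) (auto simp: less inv)
    then show ?thesis using countable_wf_supset_chain[OF assms(1) chain'] by blast
  qed
  then show ?thesis using inj by (rule countable_image_inj_on)
qed

definition finite_restrictions :: "(nat \<Rightarrow> ('a list \<Rightarrow> 'a) set) \<Rightarrow> (nat \<times> ('a list \<times> 'a) list) set" where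
  "finite_restrictions C = {(n, t). \<exists>f\<in>C n. \<forall>(xs, y)\<in>set t. f xs = y}"

lemma finite_restrictions_mono: "C \<le> D \<Longrightarrow> finite_restrictions C \<subseteq> finite_restrictions D"
  unfolding finite_restrictions_def le_fun_def by blast

lemma le_local_clone_iff_finite_restrictions:
  assumes C: "is_clone C" and D: "is_local_clone D"
  shows "C \<le> D \<longleftrightarrow> finite_restrictions C \<subseteq> finite_restrictions D"
proof
  assume sub: "finite_restrictions C \<subseteq> finite_restrictions D"
  have "g \<in> D n" if g: "g \<in> C n" for n g
  proof -
    have "C 0 = {}" "C n \<subseteq> nary_ops n" using C by (simp_all add: is_clone_def)
    then have "n \<ge> 1" "g \<in> nary_ops n" using g by (cases n; auto)+
    moreover have "\<exists>f\<in>D n. \<forall>xs\<in>B. f xs = g xs" if "finite B" for B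
    proof -
      obtain xss where xss: "set xss = B" using finite_list[OF \<open>finite B\<close>] by blast
      have "(n, map (\<lambda>xs. (xs, g xs)) xss) \<in> finite_restrictions C"
        unfolding finite_restrictions_def using g by auto
      with sub obtain f where "f \<in> D n" "\<forall>(xs, y)\<in>set (map (\<lambda>xs. (xs, g xs)) xss). f xs = y"
        unfolding finite_restrictions_def by blast
      then show ?thesis using xss by auto
    qed
    moreover have "g \<in> D n"
      if "g \<in> nary_ops n" "n \<ge> 1" "\<forall>B. finite B \<and> B \<subseteq> {xs. length xs = n} \<longrightarrow> (\<exists>f\<in>D n. \<forall>xs\<in>B. f xs = g xs)"
      using D that unfolding is_local_clone_def by blast
    ultimately show ?thesis by blast
  qed
  then show "C \<le> D" by (simp add: le_fun_def subsetI)
qed (rule finite_restrictions_mono)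

lemma countable_UNIV_arity_tables:
  assumes "countable (UNIV :: 'a set)"
  shows "countable (UNIV :: (nat \<times> ('a list \<times> 'a) list) set)"
proof -
  have lists: "countable (UNIV :: 'a list set)"
    using countable_lists[OF assms] by (simp add: lists_UNIV)
  have "countable (UNIV :: ('a list \<times> 'a) list set)"
    using countable_lists[OF countable_SIGMA[OF lists assms]] by (simp add: lists_UNIV)
  then have "countable ((UNIV :: nat set) \<times> (UNIV :: ('a list \<times> 'a) list set))"
    by (intro countable_SIGMA countableI_type)
  then show ?thesis by simp
qed

lemma local_clones_order_embedding:
  assumes "countable (UNIV :: 'a set)"
  shows "\<exists>e :: (nat \<Rightarrow> ('a list \<Rightarrow> 'a) set) \<Rightarrow> nat set.
    \<forall>C\<in>local_clones. \<forall>D\<in>local_clones. C \<le> D \<longleftrightarrow> e C \<subseteq> e D"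
proof -
  let ?num = "to_nat_on (UNIV :: (nat \<times> ('a list \<times> 'a) list) set)"
  have inj: "inj ?num" using countable_UNIV_arity_tables[OF assms] by (rule inj_on_to_nat_on)
  have "C \<le> D \<longleftrightarrow> ?num ` finite_restrictions C \<subseteq> ?num ` finite_restrictions D"
    if "C \<in> local_clones" "D \<in> local_clones" for C D :: "nat \<Rightarrow> ('a list \<Rightarrow> 'a) set"
  proof -
    have "is_clone C" "is_local_clone D"
      using that by (simp_all add: local_clones_def is_local_clone_def)
    then show ?thesis
      by (simp add: le_local_clone_iff_finite_restrictions inj_image_subset_iff[OF inj])
  qed
  then show ?thesis by (intro exI[of _ "\<lambda>C. ?num ` finite_restrictions C"]) blast
qed

theorem proposition2p6:
  assumes "countable (UNIV :: 'a set)" and "infinite (UNIV :: 'a set)"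
  shows "(\<exists>e :: (nat \<Rightarrow> ('a list \<Rightarrow> 'a) set) \<Rightarrow> nat set.
            \<forall>C \<in> (local_clones :: (nat \<Rightarrow> ('a list \<Rightarrow> 'a) set) set). \<forall>D \<in> local_clones.
              C \<le> D \<longleftrightarrow> e C \<subseteq> e D)
       \<and> (\<forall>K \<subseteq> (local_clones :: (nat \<Rightarrow> ('a list \<Rightarrow> 'a) set) set).
            (\<forall>C\<in>K. \<forall>D\<in>K. C \<le> D \<or> D \<le> C) \<and> wf {(C, D). C \<in> K \<and> D \<in> K \<and> C < D}
            \<longrightarrow> countable K)
       \<and> (\<forall>K \<subseteq> (local_clones :: (nat \<Rightarrow> ('a list \<Rightarrow> 'a) set) set).
            (\<forall>C\<in>K. \<forall>D\<in>K. C \<le> D \<or> D \<le> C) \<and> wf {(C, D). C \<in> K \<and> D \<in> K \<and> D < C}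
            \<longrightarrow> countable K)"
proof -
  obtain e :: "(nat \<Rightarrow> ('a list \<Rightarrow> 'a) set) \<Rightarrow> nat set"
    where emb: "\<forall>C\<in>local_clones. \<forall>D\<in>local_clones. C \<le> D \<longleftrightarrow> e C \<subseteq> e D"
    using local_clones_order_embedding[OF assms(1)] by blast
  have countable_chain: "countable K"
    if "K \<subseteq> local_clones" and chain: "\<forall>C\<in>K. \<forall>D\<in>K. C \<le> D \<or> D \<le> C"
      and wf: "wf {(C, D). C \<in> K \<and> D \<in> K \<and> C < D} \<or> wf {(C, D). C \<in> K \<and> D \<in> K \<and> D < C}"
    for K :: "(nat \<Rightarrow> ('a list \<Rightarrow> 'a) set) set"
  proof (rule countable_wf_chain_embedding[where e = e])
    show "countable (UNIV :: nat set)" by simp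
    show "C \<le> D \<longleftrightarrow> e C \<subseteq> e D" if "C \<in> K" "D \<in> K" for C D
      using emb \<open>K \<subseteq> local_clones\<close> that by blast
    show "C \<le> D \<or> D \<le> C" if "C \<in> K" "D \<in> K" for C D
      using chain that by blast
  qed (fact wf)
  show ?thesis
    by (intro conjI allI impI exI[of _ e] emb) (elim conjE; rule countable_chain; simp)+
qed

end
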